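(* In the setting described in the context, the function $\mathcal{W}$ is continuous on $\mathcal{K}(\mathbb{R}^n)$ with respect to the Hausdorff distance.
   Context: Let $\|\cdot\|$ be a norm on $\mathbb{R}^n$ and $\mathrm{dist}(x,\Omega):=\inf_{y\in\Omega}\|x-y\|$. Let $\mathcal{K}(\mathbb{R}^n)$ denote the nonempty compact subsets of $\mathbb{R}^n$, with Hausdorff distance $d_H(X,Y):=\max\{\sup_{x\in X}\mathrm{dist}(x,Y),\sup_{y\in Y}\mathrm{dist}(y,X)\}$. Consider $x_{k+1}=f(x_k,u_k)$ with $f:\mathbb{R}^n\times\mathbb{R}^m\to\mathbb{R}^n$ continuous and inputs $u_k\in U$, $U\subset\mathbb{R}^m$ nonempty compact. For $x\in\mathbb{R}^n$ and $\pi:\mathbb{Z}_+\to U$, $\varphi_x^\pi(0)=x$, $\varphi_x^\pi(k+1)=f(\varphi_x^\pi(k),\pi(k))$; $\mathcal{R}(X,k):=\{\varphi_x^\pi(k):x\in X,\pi\in U^{\mathbb{Z}_+}\}$. Let $\mathcal{A}\in\mathcal{K}(\mathbb{R}^n)$ be controlled invariant. Assume local $\ell_p$-stabilizability: there exist $r>0$, $M\ge1$, $p>0$, $\lambda:[0,r]\times\mathbb{Z}_+\to\mathbb{R}_+$ such that (1) for each $k$, $s\mapsto\lambda(s,k)$ is continuous, nondecreasing, $\lambda(0,k)=0$; for each $s$, $k\mapsto\lambda(s,k)$ is nonincreasing, $\lambda(s,0)\le s$; (2) $\sum_{k}\lambda(r,k)^p<\infty$; (3) for every $x$ with $\mathrm{dist}(x,\mathcal{A})\le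 r$ there is $\pi\in U^{\mathbb{Z}_+}$ with $\mathrm{dist}(\varphi_x^\pi(k),\mathcal{A})\le M\lambda(\mathrm{dist}(x,\mathcal{A}),k)$ for all $k$. Let $\alpha:\mathbb{R}^n\to\mathbb{R}_+$ be continuous with $\underline{\alpha}\,\mathrm{dist}(x,\mathcal{A})^{\bar p}\le\alpha(x)\le\overline{\alpha}\,\mathrm{dist}(x,\mathcal{A})^{\bar p}$, constants $\underline{\alpha},\overline{\alpha}>0$, $\bar p\ge p$. Define $\Psi(X):=\inf_{y\in X}\alpha(y)$, $\mathcal{V}(X):=\sum_{k=0}^\infty\Psi(\mathcal{R}(X,k))\in[0,\infty]$, and $\mathcal{W}(X):=1-\exp(-\mathcal{V}(X))$ with the convention $\exp(-\infty)=0$. *)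

theory Defs
  imports "HOL-Analysis.Analysis"
begin

definition is_norm :: "('a::real_vector \<Rightarrow> real) \<Rightarrow> bool" where
  "is_norm N \<longleftrightarrow> (\<forall>x. N x = 0 \<longleftrightarrow> x = 0) \<and> (\<forall>c x. N (c *\<^sub>R x) = \<bar>c\<bar> * N x)
     \<and> (\<forall>x y. N (x + y) \<le> N x + N y)"

definition ndist :: "('a::real_vector \<Rightarrow> real) \<Rightarrow> 'a \<Rightarrow> 'a set \<Rightarrow> real" where
  "ndist N x S = (INF y\<in>S. N (x - y))"

definition nhausdist :: "('a::real_vector \<Rightarrow> real) \<Rightarrow> 'a set \<Rightarrow> 'a set \<Rightarrow> real" where
  "nhausdist N X Y = max (SUP x\<in>X. ndist N x Y) (SUP y\<in>Y. ndist N y X)"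

fun traj :: "('a \<Rightarrow> 'b \<Rightarrow> 'a) \<Rightarrow> 'a \<Rightarrow> (nat \<Rightarrow> 'b) \<Rightarrow> nat \<Rightarrow> 'a" where
  "traj f x \<pi> 0 = x"
| "traj f x \<pi> (Suc k) = f (traj f x \<pi> k) (\<pi> k)"

definition reach :: "('a \<Rightarrow> 'b \<Rightarrow> 'a) \<Rightarrow> 'b set \<Rightarrow> 'a set \<Rightarrow> nat \<Rightarrow> 'a set" where
  "reach f U X k = {traj f x \<pi> k | x \<pi>. x \<in> X \<and> (\<forall>j. \<pi> j \<in> U)}"

definition controlled_invariant :: "('a \<Rightarrow> 'b \<Rightarrow> 'a) \<Rightarrow> 'b set \<Rightarrow> 'a set \<Rightarrow> bool" where
  "controlled_invariant f U A \<longleftrightarrow> (\<forall>x\<in>A. \<exists>u\<in>U. f x u \<in> A)"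

definition Psi :: "('a \<Rightarrow> real) \<Rightarrow> 'a set \<Rightarrow> real" where
  "Psi \<alpha> X = (INF y\<in>X. \<alpha> y)"

definition Vfun :: "('a \<Rightarrow> 'b \<Rightarrow> 'a) \<Rightarrow> 'b set \<Rightarrow> ('a \<Rightarrow> real) \<Rightarrow> 'a set \<Rightarrow> ennreal" where
  "Vfun f U \<alpha> X = (\<Sum>k. ennreal (Psi \<alpha> (reach f U X k)))"

definition Wfun :: "('a \<Rightarrow> 'b \<Rightarrow> 'a) \<Rightarrow> 'b set \<Rightarrow> ('a \<Rightarrow> real) \<Rightarrow> 'a set \<Rightarrow> real" where
  "Wfun f U \<alpha> X = (if Vfun f U \<alpha> X = \<infinity> then 1 else 1 - exp (- enn2real (Vfun f U \<alpha> X)))"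

end

theory Submission
  imports Defs
begin

text \<open>
  The k-th term of V(X) is the infimum over X of the optimal k-step cost, a continuous function
  of the initial state because U is compact. Hence every partial sum of V is continuous in the
  Hausdorff distance, which makes V, and with it W, lower semicontinuous. For upper
  semicontinuity at X with V(X) finite, the terms of V(X) tend to zero, so by the lower bound
  on \<alpha> some trajectory from X comes arbitrarily close to A. By continuity of the flow the same
  inputs bring a point of every nearby Y close to A, say to distance s, and from there local
  stabilizability bounds the remaining tail of V(Y) by the sum over j of ahi (M lam s j) powr pbar,
  which tends to 0 with s by Tannery's theorem.
\<close>

section \<open>General norms on euclidean spaces\<close>

lemma
  fixes N :: "'a::real_vector \<Rightarrow> real"
  assumes "is_norm N"
  shows is_norm_zero: "N 0 = 0"
    and is_norm_nonneg: "0 \<le> N x"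
    and is_norm_minus_commute: "N (x - y) = N (y - x)"
    and is_norm_triangle: "N (x + y) \<le> N x + N y"
proof -
  have scale: "\<And>c x. N (c *\<^sub>R x) = \<bar>c\<bar> * N x" and tri: "\<And>x y. N (x + y) \<le> N x + N y"
    using assms unfolding is_norm_def by auto
  show "N 0 = 0" using scale[of 0 0] by simp
  show "N (x - y) = N (y - x)" using scale[of "-1" "x - y"] by simp
  show "0 \<le> N x" using tri[of x "-x"] scale[of 0 0] scale[of "-1" x] by simp
  show "N (x + y) \<le> N x + N y" by (rule tri)
qed

lemma is_norm_le_norm:
  fixes N :: "'a::euclidean_space \<Rightarrow> real"
  assumes N: "is_norm N"
  shows "\<exists>C>0. \<forall>x. N x \<le> C * norm x"
proof -
  have scale: "\<And>c x. N (c *\<^sub>R x) = \<bar>c\<bar> * N x"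
    using N unfolding is_norm_def by auto
  have N_sum: "N (sum g S) \<le> (\<Sum>b\<in>S. N (g b))" if "finite S" for g :: "'a \<Rightarrow> 'a" and S
    using that by (induction S rule: finite_induct)
      (auto simp: is_norm_zero[OF N] intro: order_trans[OF is_norm_triangle[OF N]])
  define C where "C = (\<Sum>b\<in>Basis. N b) + 1"
  have "C > 0" unfolding C_def by (simp add: sum_nonneg add_nonneg_pos is_norm_nonneg[OF N])
  moreover have "N x \<le> C * norm x" for x
  proof -
    have "N x = N (\<Sum>b\<in>Basis. (x \<bullet> b) *\<^sub>R b)" by (simp add: euclidean_representation)
    also have "\<dots> \<le> (\<Sum>b\<in>Basis. \<bar>x \<bullet> b\<bar> * N b)" by (rule order_trans[OF N_sum]) (simp_all add: scale)
    also have "\<dots> \<le> (\<Sum>b\<in>Basis. norm x * N b)"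
      by (intro sum_mono mult_right_mono) (auto simp: Basis_le_norm is_norm_nonneg[OF N])
    also have "\<dots> \<le> C * norm x" by (simp add: C_def sum_distrib_left algebra_simps)
    finally show ?thesis .
  qed
  ultimately show ?thesis by blast
qed

lemma ndist_le:
  assumes "is_norm N" "y \<in> S"
  shows "ndist N x S \<le> N (x - y)"
  unfolding ndist_def using assms
  by (intro cINF_lower bdd_belowI2[of _ 0]) (auto simp: is_norm_nonneg)

lemma ndist_nonneg:
  assumes "is_norm N" "S \<noteq> {}"
  shows "0 \<le> ndist N x S"
  unfolding ndist_def using assms by (intro cINF_greatest) (auto simp: is_norm_nonneg)

lemma ndist_less_iff:
  assumes "is_norm N" "S \<noteq> {}"
  shows "ndist N x S < d \<longleftrightarrow> (\<exists>y\<in>S. N (x - y) < d)"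
  unfolding ndist_def using assms
  by (subst cInf_less_iff) (auto intro: bdd_belowI2[of _ 0] simp: is_norm_nonneg)

lemma ndist_triangle:
  assumes N: "is_norm N" and S: "S \<noteq> {}"
  shows "ndist N a S \<le> N (a - b) + ndist N b S"
proof -
  have "ndist N a S - N (a - b) \<le> ndist N b S"
    unfolding ndist_def[of N b S]
  proof (rule cINF_greatest[OF S])
    fix w assume "w \<in> S"
    then have "ndist N a S \<le> N (a - w)" by (rule ndist_le[OF N])
    also have "\<dots> \<le> N (a - b) + N (b - w)" using is_norm_triangle[OF N, of "a - b" "b - w"] by simp
    finally show "ndist N a S - N (a - b) \<le> N (b - w)" by simp
  qed
  then show ?thesis by simp
qed

lemma continuous_on_ndist:
  fixes N :: "'a::euclidean_space \<Rightarrow> real"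
  assumes N: "is_norm N" and S: "S \<noteq> {}"
  shows "continuous_on T (\<lambda>x. ndist N x S)"
proof -
  obtain C where C: "C > 0" "\<And>x. N x \<le> C * norm x" using is_norm_le_norm[OF N] by blast
  have "C-lipschitz_on T (\<lambda>x. ndist N x S)"
  proof (rule lipschitz_onI)
    fix x y
    have "\<bar>ndist N x S - ndist N y S\<bar> \<le> N (x - y)"
      using ndist_triangle[OF N S, of x y] ndist_triangle[OF N S, of y x]
        is_norm_minus_commute[OF N, of x y] by (simp add: abs_le_iff)
    also have "\<dots> \<le> C * dist x y" using C(2) by (simp add: dist_norm)
    finally show "dist (ndist N x S) (ndist N y S) \<le> C * dist x y" by (simp add: dist_real_def)
  qed (use C in simp)
  then show ?thesis by (rule lipschitz_on_continuous_on)
qed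

lemma continuous_on_is_norm:
  fixes N :: "'a::euclidean_space \<Rightarrow> real"
  assumes "is_norm N"
  shows "continuous_on T N"
  using continuous_on_ndist[OF assms, of "{0}" T] by (simp add: ndist_def)

lemma is_norm_ge_norm:
  fixes N :: "'a::euclidean_space \<Rightarrow> real"
  assumes N: "is_norm N"
  shows "\<exists>c>0. \<forall>x. c * norm x \<le> N x"
proof -
  have scale: "\<And>c x. N (c *\<^sub>R x) = \<bar>c\<bar> * N x" and zero: "\<And>x. N x = 0 \<longleftrightarrow> x = 0"
    using N unfolding is_norm_def by auto
  obtain e :: 'a where "e \<in> Basis" using nonempty_Basis by blast
  then have "sphere (0::'a) 1 \<noteq> {}" by (auto intro!: exI[of _ e])
  then obtain x0 where x0: "x0 \<in> sphere 0 1" "\<And>y. y \<in> sphere 0 1 \<Longrightarrow> N x0 \<le> N y"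
    using continuous_attains_inf[OF compact_sphere _ continuous_on_is_norm[OF N]] by blast
  have "N x0 > 0" using x0(1) zero[of x0] is_norm_nonneg[OF N, of x0] by auto
  moreover have "N x0 * norm x \<le> N x" for x
  proof (cases "x = 0")
    case False
    have "N x0 \<le> N ((1 / norm x) *\<^sub>R x)" using x0(2) False by simp
    also have "\<dots> = N x / norm x" by (simp add: scale)
    finally show ?thesis using False by (simp add: field_simps)
  qed (simp add: is_norm_zero[OF N])
  ultimately show ?thesis by blast
qed

section \<open>Hausdorff neighbourhoods of compact sets\<close>

lemma nhausdist_commute: "nhausdist N X Y = nhausdist N Y X"
  by (simp add: nhausdist_def max.commute)

lemma ndist_le_nhausdist:
  fixes N :: "'a::euclidean_space \<Rightarrow> real"
  assumes N: "is_norm N" and X: "compact X" "x \<in> X" and Y: "Y \<noteq> {}"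
  shows "ndist N x Y \<le> nhausdist N X Y"
proof -
  have "bounded ((\<lambda>x. ndist N x Y) ` X)"
    by (intro compact_imp_bounded compact_continuous_image continuous_on_ndist N X Y)
  then have "ndist N x Y \<le> (SUP x\<in>X. ndist N x Y)"
    by (intro cSUP_upper X bounded_imp_bdd_above)
  then show ?thesis unfolding nhausdist_def by linarith
qed

definition haus_nhds :: "('a::real_normed_vector \<Rightarrow> real) \<Rightarrow> 'a set \<Rightarrow> 'a set filter" where
  "haus_nhds N X = (INF \<delta>\<in>{0<..}. principal {Y. compact Y \<and> Y \<noteq> {} \<and> nhausdist N X Y < \<delta>})"

lemma eventually_haus_nhds:
  "eventually P (haus_nhds N X) \<longleftrightarrow>
     (\<exists>\<delta>>0. \<forall>Y. compact Y \<and> Y \<noteq> {} \<and> nhausdist N X Y < \<delta> \<longrightarrow> P Y)"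
  unfolding haus_nhds_def
  by (subst eventually_INF_base)
     (auto simp: eventually_principal intro: exI[of _ 1] intro!: bexI[of _ "min _ _"])

lemma eventually_haus_nhds_compact: "eventually (\<lambda>Y. compact Y \<and> Y \<noteq> {}) (haus_nhds N X)"
  unfolding eventually_haus_nhds by (auto intro: exI[of _ 1])

lemma eventually_haus_nhds_close:
  fixes N :: "'a::euclidean_space \<Rightarrow> real"
  assumes N: "is_norm N" and X: "compact X" "X \<noteq> {}" and e: "e > 0"
  shows "eventually (\<lambda>Y. (\<forall>x\<in>X. \<exists>y\<in>Y. dist x y < e) \<and> (\<forall>y\<in>Y. \<exists>x\<in>X. dist y x < e))
           (haus_nhds N X)"
proof -
  obtain c where c: "c > 0" "\<And>x. c * norm x \<le> N x" using is_norm_ge_norm[OF N] by blast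
  have close: "\<exists>b\<in>B. dist a b < e" if B: "B \<noteq> {}" "ndist N a B < c * e" for a B
  proof -
    obtain b where b: "b \<in> B" "N (a - b) < c * e" using B ndist_less_iff[OF N] by blast
    have "c * dist a b < c * e" using b(2) c(2)[of "a - b"] by (simp add: dist_norm)
    then show ?thesis using b(1) c(1) by auto
  qed
  show ?thesis unfolding eventually_haus_nhds
  proof (intro exI[of _ "c * e"] conjI allI impI ballI)
    show "c * e > 0" using c e by simp
    fix Y assume Y: "compact Y \<and> Y \<noteq> {} \<and> nhausdist N X Y < c * e"
    show "\<exists>y\<in>Y. dist x y < e" if "x \<in> X" for x
      using Y ndist_le_nhausdist[OF N X(1) that, of Y] by (intro close) simp_all
    show "\<exists>x\<in>X. dist y x < e" if "y \<in> Y" for y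
      using Y ndist_le_nhausdist[OF N _ that X(2)] by (intro close[OF X(2)]) (simp add: nhausdist_commute)
  qed
qed

lemma INF_le_INF_add:
  fixes H :: "'a \<Rightarrow> real" and H' :: "'b \<Rightarrow> real"
  assumes "X \<noteq> {}" "bdd_below (H' ` Y)" and "\<And>x. x \<in> X \<Longrightarrow> \<exists>y\<in>Y. H' y \<le> H x + e"
  shows "(INF y\<in>Y. H' y) \<le> (INF x\<in>X. H x) + e"
proof -
  have "(INF y\<in>Y. H' y) - e \<le> (INF x\<in>X. H x)"
  proof (rule cINF_greatest[OF assms(1)])
    fix x assume "x \<in> X"
    then obtain y where "y \<in> Y" "H' y \<le> H x + e" using assms(3) by blast
    then show "(INF y\<in>Y. H' y) - e \<le> H x" using cINF_lower[OF assms(2)] by fastforce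
  qed
  then show ?thesis by simp
qed

lemma tendsto_INF_haus_nhds:
  fixes H :: "'a::euclidean_space \<Rightarrow> real"
  assumes N: "is_norm N" and H: "continuous_on UNIV H" and X: "compact X" "X \<noteq> {}"
  shows "((\<lambda>Y. INF y\<in>Y. H y) \<longlongrightarrow> (INF x\<in>X. H x)) (haus_nhds N X)"
proof (rule tendstoI)
  fix e :: real assume "e > 0"
  obtain B where B: "\<And>x. x \<in> X \<Longrightarrow> norm x \<le> B" using compact_imp_bounded[OF X(1)] bounded_iff by blast
  have "uniformly_continuous_on (cball 0 (B + 1)) H"
    by (intro compact_uniformly_continuous continuous_on_subset[OF H]) auto
  then obtain d where d: "d > 0" "\<And>x y. x \<in> cball 0 (B + 1) \<Longrightarrow> y \<in> cball 0 (B + 1) \<Longrightarrow>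
      dist y x < d \<Longrightarrow> dist (H y) (H x) < e / 2"
    unfolding uniformly_continuous_on_def using \<open>e > 0\<close> by (metis half_gt_zero)
  have near: "H y \<le> H x + e / 2 \<and> H x \<le> H y + e / 2" if "x \<in> X" "dist y x < min d 1" for x y
  proof -
    have "norm y \<le> norm x + dist y x" using norm_triangle_ineq2[of y x] by (simp add: dist_norm)
    then have "x \<in> cball 0 (B + 1)" "y \<in> cball 0 (B + 1)" using B[OF that(1)] that(2) by auto
    then have "dist (H y) (H x) < e / 2" using d(2) that(2) by simp
    then show ?thesis unfolding dist_real_def abs_less_iff by linarith
  qed
  have bdd: "bdd_below (H ` S)" if "compact S" for S
    by (intro bounded_imp_bdd_below compact_imp_bounded compact_continuous_image
        continuous_on_subset[OF H] that) simp
  have "min d 1 > 0" using d(1) by simp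
  from eventually_haus_nhds_close[OF N X this] eventually_haus_nhds_compact
  show "eventually (\<lambda>Y. dist (INF y\<in>Y. H y) (INF x\<in>X. H x) < e) (haus_nhds N X)"
  proof eventually_elim
    case (elim Y)
    have "\<exists>y\<in>Y. H y \<le> H x + e / 2" if x: "x \<in> X" for x
    proof -
      obtain y where "y \<in> Y" "dist x y < min d 1" using elim x by blast
      then show ?thesis using near[OF x, of y] by (auto simp: dist_commute)
    qed
    then have "(INF y\<in>Y. H y) \<le> (INF x\<in>X. H x) + e / 2"
      using elim by (intro INF_le_INF_add X(2) bdd) auto
    moreover have "\<exists>x\<in>X. H x \<le> H y + e / 2" if y: "y \<in> Y" for y
    proof -
      obtain x where "x \<in> X" "dist y x < min d 1" using elim y by blast
      then show ?thesis using near[of x y] by auto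
    qed
    then have "(INF x\<in>X. H x) \<le> (INF y\<in>Y. H y) + e / 2"
      using elim by (intro INF_le_INF_add X(1) bdd) auto
    ultimately show ?case using \<open>e > 0\<close> by (simp add: dist_real_def abs_le_iff)
  qed
qed

section \<open>Trajectories and optimal costs\<close>

lemma traj_cong: "(\<And>i. i < k \<Longrightarrow> \<pi> i = \<pi>' i) \<Longrightarrow> traj f y \<pi> k = traj f y \<pi>' k"
  by (induction k) auto

lemma traj_Suc_shift: "traj f y \<pi> (Suc k) = traj f (f y (\<pi> 0)) (\<lambda>j. \<pi> (Suc j)) k"
  by (induction k) auto

lemma traj_append:
  "traj f y (\<lambda>i. if i < K then \<pi>' i else \<pi> (i - K)) (K + j) = traj f (traj f y \<pi>' K) \<pi> j"
  by (induction j) (auto intro: traj_cong)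

lemma traj_in_reach: "x \<in> X \<Longrightarrow> \<forall>j. \<pi> j \<in> U \<Longrightarrow> traj f x \<pi> k \<in> reach f U X k"
  unfolding reach_def by auto

lemma reach_append:
  assumes "z \<in> reach f U X K" "\<forall>j. \<pi> j \<in> U"
  shows "traj f z \<pi> j \<in> reach f U X (K + j)"
proof -
  obtain x \<pi>' where z: "z = traj f x \<pi>' K" "x \<in> X" "\<forall>j. \<pi>' j \<in> U"
    using assms(1) unfolding reach_def by blast
  have "traj f x (\<lambda>i. if i < K then \<pi>' i else \<pi> (i - K)) (K + j) \<in> reach f U X (K + j)"
    using z assms(2) by (intro traj_in_reach) auto
  then show ?thesis by (simp only: traj_append z(1))
qed

lemma continuous_on_traj:
  assumes "continuous_on UNIV (\<lambda>(x, u). f x u)"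
  shows "continuous_on UNIV (\<lambda>y. traj f y \<pi> k)"
proof (induction k)
  case (Suc k)
  have "continuous_on UNIV ((\<lambda>(x, u). f x u) \<circ> (\<lambda>y. (traj f y \<pi> k, \<pi> k)))"
    by (intro continuous_on_compose continuous_on_Pair Suc continuous_on_const
        continuous_on_subset[OF assms]) simp
  then show ?case by (simp add: o_def)
qed (simp add: continuous_on_id)

lemma continuous_on_INF_compact:
  fixes G :: "'a::heine_borel \<times> 'b::metric_space \<Rightarrow> real"
  assumes G: "continuous_on UNIV G" and U: "compact U" "U \<noteq> {}"
  shows "continuous_on UNIV (\<lambda>y. INF u\<in>U. G (y, u))"
  unfolding continuous_on_iff
proof (intro ballI allI impI)
  fix y :: 'a and e :: real assume "e > 0"
  have "uniformly_continuous_on (cball y 1 \<times> U) G"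
    using U by (intro compact_uniformly_continuous continuous_on_subset[OF G] compact_Times) auto
  then obtain d where d: "d > 0" "\<And>p q. p \<in> cball y 1 \<times> U \<Longrightarrow> q \<in> cball y 1 \<times> U \<Longrightarrow>
      dist q p < d \<Longrightarrow> dist (G q) (G p) < e / 2"
    unfolding uniformly_continuous_on_def using \<open>e > 0\<close> by (metis half_gt_zero)
  have bdd: "bdd_below ((\<lambda>u. G (z, u)) ` U)" for z
    by (intro bounded_imp_bdd_below compact_imp_bounded compact_continuous_image U
        continuous_on_compose2[OF G] continuous_intros) auto
  show "\<exists>d>0. \<forall>y'\<in>UNIV. dist y' y < d \<longrightarrow> dist (INF u\<in>U. G (y', u)) (INF u\<in>U. G (y, u)) < e"
  proof (intro exI[of _ "min d 1"] conjI ballI impI)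
    fix y' assume y': "dist y' y < min d 1"
    have near: "G (y', u) \<le> G (y, u) + e / 2 \<and> G (y, u) \<le> G (y', u) + e / 2" if "u \<in> U" for u
    proof -
      have "dist (G (y', u)) (G (y, u)) < e / 2"
        using y' that by (intro d(2)) (auto simp: dist_Pair_Pair dist_commute)
      then show ?thesis unfolding dist_real_def abs_less_iff by linarith
    qed
    have "(INF u\<in>U. G (y', u)) \<le> (INF u\<in>U. G (y, u)) + e / 2"
      using near by (intro INF_le_INF_add U(2) bdd) auto
    moreover have "(INF u\<in>U. G (y, u)) \<le> (INF u\<in>U. G (y', u)) + e / 2"
      using near by (intro INF_le_INF_add U(2) bdd) auto
    ultimately show "dist (INF u\<in>U. G (y', u)) (INF u\<in>U. G (y, u)) < e"
      using \<open>e > 0\<close> by (simp add: dist_real_def abs_le_iff)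
  qed (use d(1) in simp)
qed

lemma LIMSEQ_one_minus_exp_partial_sums:
  fixes a :: "nat \<Rightarrow> real"
  assumes a: "\<And>k. 0 \<le> a k"
  shows "(\<lambda>K. 1 - exp (- (\<Sum>k<K. a k))) \<longlonglongrightarrow> (if summable a then 1 - exp (- suminf a) else 1)"
proof (cases "summable a")
  case True
  then show ?thesis by (auto intro!: tendsto_intros summable_LIMSEQ)
next
  case False
  have "filterlim (\<lambda>K. \<Sum>k<K. a k) at_top sequentially"
    unfolding filterlim_at_top eventually_sequentially
  proof
    fix B
    obtain K where K: "B < (\<Sum>k<K. a k)"
      using False summableI_nonneg_bounded[of a B] a by (meson not_le)
    have "(\<Sum>k<K. a k) \<le> (\<Sum>k<K'. a k)" if "K \<le> K'" for K'
      using that a by (intro sum_mono2) auto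
    with K show "\<exists>K. \<forall>K'\<ge>K. B \<le> (\<Sum>k<K'. a k)" by force
  qed
  then have "((\<lambda>K. exp (- (\<Sum>k<K. a k))) \<longlongrightarrow> 0) sequentially"
    by (intro filterlim_compose[OF exp_at_bot] filterlim_compose[OF filterlim_uminus_at_bot_at_top])
  then show ?thesis using False by (auto intro: tendsto_eq_intros)
qed

locale control_system =
  fixes f :: "'a::euclidean_space \<Rightarrow> 'b::metric_space \<Rightarrow> 'a" and U :: "'b set"
    and \<alpha> :: "'a \<Rightarrow> real"
  assumes f_cont: "continuous_on UNIV (\<lambda>(x, u). f x u)"
    and U_compact: "compact U" and U_ne: "U \<noteq> {}"
    and \<alpha>_cont: "continuous_on UNIV \<alpha>" and \<alpha>_nonneg: "\<And>x. 0 \<le> \<alpha> x"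
begin

fun opt_cost :: "nat \<Rightarrow> 'a \<Rightarrow> real" where
  "opt_cost 0 y = \<alpha> y"
| "opt_cost (Suc k) y = (INF u\<in>U. opt_cost k (f y u))"

lemma opt_cost_nonneg: "0 \<le> opt_cost k y"
  by (induction k arbitrary: y) (auto simp: \<alpha>_nonneg U_ne intro: cINF_greatest)

lemma bdd_below_opt_cost: "bdd_below ((\<lambda>u. opt_cost k (g u)) ` S)"
  by (rule bdd_belowI2, rule opt_cost_nonneg)

lemma continuous_on_opt_cost: "continuous_on UNIV (opt_cost k)"
proof (induction k)
  case (Suc k)
  have "continuous_on UNIV (\<lambda>y. INF u\<in>U. (opt_cost k \<circ> (\<lambda>(x, u). f x u)) (y, u))"
    by (intro continuous_on_INF_compact continuous_on_compose f_cont U_compact U_ne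
        continuous_on_subset[OF Suc]) simp
  then show ?case by (simp add: o_def)
qed (simp add: \<alpha>_cont)

lemma opt_cost_le_traj: "\<forall>j. \<pi> j \<in> U \<Longrightarrow> opt_cost k y \<le> \<alpha> (traj f y \<pi> k)"
proof (induction k arbitrary: y \<pi>)
  case (Suc k)
  have "opt_cost (Suc k) y \<le> opt_cost k (f y (\<pi> 0))"
    unfolding opt_cost.simps using Suc.prems by (intro cINF_lower bdd_below_opt_cost) simp
  also have "\<dots> \<le> \<alpha> (traj f y \<pi> (Suc k))"
    unfolding traj_Suc_shift using Suc by auto
  finally show ?case .
qed simp

lemma opt_cost_attained: "\<exists>\<pi>. (\<forall>j. \<pi> j \<in> U) \<and> \<alpha> (traj f y \<pi> k) = opt_cost k y"
proof (induction k arbitrary: y)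
  case 0
  obtain u where "u \<in> U" using U_ne by blast
  then show ?case by (intro exI[of _ "\<lambda>_. u"]) simp
next
  case (Suc k)
  have "continuous_on U (\<lambda>u. (\<lambda>(x, u). f x u) (y, u))"
    by (intro continuous_on_compose2[OF f_cont] continuous_intros) auto
  then have "continuous_on U (\<lambda>u. opt_cost k (f y u))"
    by (intro continuous_on_compose2[OF continuous_on_opt_cost]) auto
  then obtain u where u: "u \<in> U" "\<And>v. v \<in> U \<Longrightarrow> opt_cost k (f y u) \<le> opt_cost k (f y v)"
    using continuous_attains_inf[OF U_compact U_ne] by blast
  have "opt_cost (Suc k) y = opt_cost k (f y u)"
  proof (rule antisym)
    show "opt_cost (Suc k) y \<le> opt_cost k (f y u)"
      unfolding opt_cost.simps by (rule cINF_lower[OF bdd_below_opt_cost u(1)])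
    show "opt_cost k (f y u) \<le> opt_cost (Suc k) y"
      unfolding opt_cost.simps by (rule cINF_greatest[OF U_ne u(2)])
  qed
  moreover obtain \<pi> where "\<forall>j. \<pi> j \<in> U" "\<alpha> (traj f (f y u) \<pi> k) = opt_cost k (f y u)"
    using Suc by blast
  ultimately show ?case using u(1)
    by (intro exI[of _ "case_nat u \<pi>"]) (simp add: traj_Suc_shift del: traj.simps split: nat.split)
qed

lemma reach_nonempty:
  assumes "X \<noteq> {}"
  shows "reach f U X k \<noteq> {}"
proof -
  obtain x u where "x \<in> X" "u \<in> U" using assms U_ne by blast
  then have "traj f x (\<lambda>_. u) k \<in> reach f U X k" by (intro traj_in_reach) auto
  then show ?thesis by blast
qed

abbreviation stage_cost :: "nat \<Rightarrow> 'a set \<Rightarrow> real" where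
  "stage_cost k X \<equiv> Psi \<alpha> (reach f U X k)"

lemma stage_cost_nonneg: "X \<noteq> {} \<Longrightarrow> 0 \<le> stage_cost k X"
  unfolding Psi_def using reach_nonempty \<alpha>_nonneg by (intro cINF_greatest) auto

lemma stage_cost_le: "z \<in> reach f U X k \<Longrightarrow> stage_cost k X \<le> \<alpha> z"
  unfolding Psi_def using \<alpha>_nonneg by (intro cINF_lower bdd_belowI2[of _ 0])

lemma stage_cost_eq_INF_opt_cost:
  assumes X: "X \<noteq> {}"
  shows "stage_cost k X = (INF x\<in>X. opt_cost k x)"
proof (rule antisym)
  have "\<exists>z\<in>reach f U X k. \<alpha> z \<le> opt_cost k x + 0" if x: "x \<in> X" for x
  proof -
    obtain \<pi> where \<pi>: "\<forall>j. \<pi> j \<in> U" "\<alpha> (traj f x \<pi> k) = opt_cost k x"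
      using opt_cost_attained by blast
    show ?thesis using traj_in_reach[OF x \<pi>(1)] \<pi>(2) by force
  qed
  then show "stage_cost k X \<le> (INF x\<in>X. opt_cost k x)"
    unfolding Psi_def using X \<alpha>_nonneg by (intro INF_le_INF_add[where e = 0, simplified] bdd_belowI2) auto
  have "\<exists>x\<in>X. opt_cost k x \<le> \<alpha> z + 0" if "z \<in> reach f U X k" for z
    using that opt_cost_le_traj by (auto simp: reach_def)
  then show "(INF x\<in>X. opt_cost k x) \<le> stage_cost k X"
    unfolding Psi_def using reach_nonempty[OF X] opt_cost_nonneg
    by (intro INF_le_INF_add[where e = 0, simplified] bdd_belowI2) auto
qed

lemma tendsto_stage_cost:
  assumes N: "is_norm N" and X: "compact X" "X \<noteq> {}"
  shows "((\<lambda>Y. stage_cost k Y) \<longlongrightarrow> stage_cost k X) (haus_nhds N X)"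
proof -
  have "((\<lambda>Y. INF y\<in>Y. opt_cost k y) \<longlongrightarrow> stage_cost k X) (haus_nhds N X)"
    unfolding stage_cost_eq_INF_opt_cost[OF X(2)]
    by (rule tendsto_INF_haus_nhds[OF N continuous_on_opt_cost X])
  moreover have "eventually (\<lambda>Y. stage_cost k Y = (INF y\<in>Y. opt_cost k y)) (haus_nhds N X)"
    using eventually_haus_nhds_compact by (rule eventually_mono) (simp add: stage_cost_eq_INF_opt_cost)
  ultimately show ?thesis by (simp add: tendsto_cong)
qed

lemma Wfun_eq:
  assumes X: "X \<noteq> {}"
  shows "Wfun f U \<alpha> X =
    (if summable (\<lambda>k. stage_cost k X) then 1 - exp (- (\<Sum>k. stage_cost k X)) else 1)"
proof (cases "summable (\<lambda>k. stage_cost k X)")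
  case True
  then have "Vfun f U \<alpha> X = ennreal (\<Sum>k. stage_cost k X)"
    unfolding Vfun_def using stage_cost_nonneg[OF X] by (rule suminf_ennreal2[rotated])
  moreover have "0 \<le> (\<Sum>k. stage_cost k X)" using True stage_cost_nonneg[OF X] by (rule suminf_nonneg)
  ultimately show ?thesis using True by (simp add: Wfun_def)
next
  case False
  then have "Vfun f U \<alpha> X = \<infinity>"
    unfolding Vfun_def using summable_suminf_not_top[of "\<lambda>k. stage_cost k X", OF stage_cost_nonneg[OF X]] by auto
  then show ?thesis using False by (simp add: Wfun_def)
qed

lemma Wfun_LIMSEQ:
  assumes "X \<noteq> {}"
  shows "(\<lambda>K. 1 - exp (- (\<Sum>k<K. stage_cost k X))) \<longlonglongrightarrow> Wfun f U \<alpha> X"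
  unfolding Wfun_eq[OF assms]
  by (rule LIMSEQ_one_minus_exp_partial_sums[OF stage_cost_nonneg[OF assms]])

lemma Wfun_ge_partial_sum:
  assumes "X \<noteq> {}"
  shows "1 - exp (- (\<Sum>k<K. stage_cost k X)) \<le> Wfun f U \<alpha> X"
  using stage_cost_nonneg[OF assms] by (intro incseq_le[OF _ Wfun_LIMSEQ[OF assms]] incseq_SucI) simp

lemma Wfun_le:
  assumes "X \<noteq> {}" and "\<And>K. (\<Sum>k<K. stage_cost k X) \<le> t"
  shows "Wfun f U \<alpha> X \<le> 1 - exp (- t)"
  using assms(2) by (intro LIMSEQ_le_const2[OF Wfun_LIMSEQ[OF assms(1)]]) simp

lemma Wfun_le_one: "X \<noteq> {} \<Longrightarrow> Wfun f U \<alpha> X \<le> 1"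
  by (intro LIMSEQ_le_const2[OF Wfun_LIMSEQ]) auto

lemma eventually_Wfun_gt:
  assumes N: "is_norm N" and X: "compact X" "X \<noteq> {}" and a: "a < Wfun f U \<alpha> X"
  shows "eventually (\<lambda>Y. a < Wfun f U \<alpha> Y) (haus_nhds N X)"
proof -
  obtain K where K: "a < 1 - exp (- (\<Sum>k<K. stage_cost k X))"
    using order_tendstoD(1)[OF Wfun_LIMSEQ[OF X(2)] a] unfolding eventually_sequentially by blast
  have "((\<lambda>Y. 1 - exp (- (\<Sum>k<K. stage_cost k Y))) \<longlongrightarrow> 1 - exp (- (\<Sum>k<K. stage_cost k X)))
      (haus_nhds N X)"
    by (intro tendsto_intros tendsto_stage_cost[OF N X])
  from order_tendstoD(1)[OF this K] eventually_haus_nhds_compact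
  show ?thesis
  proof eventually_elim
    case (elim Y)
    then show ?case using Wfun_ge_partial_sum[of Y K] by linarith
  qed
qed

end

section \<open>Stabilizable systems\<close>

locale stabilizable_system = control_system f U \<alpha>
  for f :: "'a::euclidean_space \<Rightarrow> 'b::metric_space \<Rightarrow> 'a" and U \<alpha> +
  fixes N :: "'a \<Rightarrow> real" and A :: "'a set"
    and r M p pbar alo ahi :: real and lam :: "real \<Rightarrow> nat \<Rightarrow> real"
  assumes normN: "is_norm N" and A_ne: "A \<noteq> {}"
    and r_pos: "r > 0" and M_ge: "M \<ge> 1" and p_pos: "p > 0"
    and lam_nonneg: "\<And>s k. s \<in> {0..r} \<Longrightarrow> lam s k \<ge> 0"
    and lam_cont: "\<And>k. continuous_on {0..r} (\<lambda>s. lam s k)"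
    and lam_mono: "\<And>k s t. s \<in> {0..r} \<Longrightarrow> t \<in> {0..r} \<Longrightarrow> s \<le> t \<Longrightarrow> lam s k \<le> lam t k"
    and lam_zero: "\<And>k. lam 0 k = 0"
    and lam_antimono: "\<And>s k l. s \<in> {0..r} \<Longrightarrow> k \<le> l \<Longrightarrow> lam s l \<le> lam s k"
    and lam_init: "\<And>s. s \<in> {0..r} \<Longrightarrow> lam s 0 \<le> s"
    and lam_summable: "summable (\<lambda>k. lam r k powr p)"
    and stabilizable: "\<And>x. ndist N x A \<le> r \<Longrightarrow>
        \<exists>\<pi>. (\<forall>j. \<pi> j \<in> U) \<and> (\<forall>k. ndist N (traj f x \<pi> k) A \<le> M * lam (ndist N x A) k)"
    and alo_pos: "alo > 0" and ahi_pos: "ahi > 0" and pbar_ge: "pbar \<ge> p"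
    and \<alpha>_lower: "\<And>x. alo * ndist N x A powr pbar \<le> \<alpha> x"
    and \<alpha>_upper: "\<And>x. \<alpha> x \<le> ahi * ndist N x A powr pbar"
begin

definition decay_bound :: "real \<Rightarrow> nat \<Rightarrow> real" where
  "decay_bound s j = ahi * (M * lam s j) powr pbar"

lemma decay_bound_nonneg: "0 \<le> decay_bound s j"
  unfolding decay_bound_def using ahi_pos by simp

lemma decay_bound_le:
  assumes s: "s \<in> {0..r}"
  shows "decay_bound s j \<le> ahi * M powr pbar * r powr (pbar - p) * lam r j powr p"
proof -
  have "0 \<le> lam s j" "lam s j \<le> lam r j" using lam_nonneg[OF s] lam_mono[OF s, of r j] r_pos s by auto
  moreover have "lam s j \<le> r" using lam_antimono[OF s, of 0 j] lam_init[OF s] s by auto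
  moreover have "(M * lam s j) powr pbar = M powr pbar * (lam s j powr p * lam s j powr (pbar - p))"
    by (simp add: powr_mult flip: powr_add)
  ultimately have "(M * lam s j) powr pbar \<le> M powr pbar * (lam r j powr p * r powr (pbar - p))"
    using pbar_ge p_pos by (auto intro!: mult_left_mono mult_mono powr_mono2)
  then show ?thesis unfolding decay_bound_def using ahi_pos by (simp add: algebra_simps)
qed

lemma summable_decay_bound: "s \<in> {0..r} \<Longrightarrow> summable (decay_bound s)"
  by (rule summable_comparison_test'[of "\<lambda>j. ahi * M powr pbar * r powr (pbar - p) * lam r j powr p" 0])
     (auto intro: summable_mult lam_summable simp: decay_bound_le decay_bound_nonneg)

lemma tendsto_suminf_decay_bound: "((\<lambda>s. suminf (decay_bound s)) \<longlongrightarrow> 0) (at_right 0)"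
proof -
  have ev: "eventually (\<lambda>s. s \<in> {0<..<r}) (at_right (0::real))"
    by (rule eventually_at_right_real[OF r_pos])
  have lim: "((\<lambda>s. decay_bound s j) \<longlongrightarrow> 0) (at_right 0)" for j
  proof -
    have "((\<lambda>s. M * lam s j) \<longlongrightarrow> 0) (at_right 0)"
      using continuous_on_Icc_at_rightD[OF lam_cont r_pos]
      by (intro tendsto_mult_right_zero) (simp add: lam_zero)
    moreover have "eventually (\<lambda>s. 0 \<le> M * lam s j) (at_right 0)"
      using ev by eventually_elim (use M_ge lam_nonneg in auto)
    ultimately have "((\<lambda>s. (M * lam s j) powr pbar) \<longlongrightarrow> 0) (at_right 0)"
      using pbar_ge p_pos by (intro tendsto_zero_powrI[OF _ tendsto_const]) auto
    then show ?thesis unfolding decay_bound_def by (rule tendsto_mult_right_zero)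
  qed
  have bound: "eventually (\<lambda>(j, s). norm (decay_bound s j) \<le>
      ahi * M powr pbar * r powr (pbar - p) * lam r j powr p) (at_top \<times>\<^sub>F at_right 0)"
    unfolding eventually_prod_filter
    by (intro exI[of _ "\<lambda>_. True"] exI[of _ "\<lambda>s. s \<in> {0<..<r}"] conjI ev)
       (auto simp: decay_bound_le decay_bound_nonneg)
  have "((\<lambda>s. \<Sum>j. decay_bound s j) \<longlongrightarrow> (\<Sum>j. 0)) (at_right 0)"
    using tannerys_theorem[OF lim bound summable_mult[OF lam_summable]] by simp
  then show ?thesis by simp
qed

lemma small_decay_bound_sums:
  assumes e: "e > 0"
  shows "\<exists>\<rho>>0. \<rho> \<le> r \<and> (\<forall>s\<in>{0..\<rho>}. suminf (decay_bound s) \<le> e)"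
proof -
  obtain b where b: "b > 0" "\<And>s. 0 < s \<Longrightarrow> s < b \<Longrightarrow> suminf (decay_bound s) < e"
    using order_tendstoD(2)[OF tendsto_suminf_decay_bound e]
    unfolding eventually_at_right_field by auto
  have "decay_bound 0 = (\<lambda>_. 0)" by (auto simp: decay_bound_def lam_zero fun_eq_iff)
  then have "suminf (decay_bound s) \<le> e" if "s \<in> {0..min (b / 2) r}" for s
    using b that e by (cases "s = 0") (auto intro: less_imp_le)
  then show ?thesis using b(1) r_pos by (intro exI[of _ "min (b / 2) r"]) auto
qed

lemma stabilizing_input:
  assumes "ndist N z A \<le> r"
  shows "\<exists>\<pi>. (\<forall>j. \<pi> j \<in> U) \<and> (\<forall>j. \<alpha> (traj f z \<pi> j) \<le> decay_bound (ndist N z A) j)"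
proof -
  obtain \<pi> where \<pi>: "\<forall>j. \<pi> j \<in> U" "\<And>j. ndist N (traj f z \<pi> j) A \<le> M * lam (ndist N z A) j"
    using stabilizable[OF assms] by blast
  have "\<alpha> (traj f z \<pi> j) \<le> decay_bound (ndist N z A) j" for j
  proof -
    have "\<alpha> (traj f z \<pi> j) \<le> ahi * ndist N (traj f z \<pi> j) A powr pbar" by (rule \<alpha>_upper)
    also have "\<dots> \<le> decay_bound (ndist N z A) j"
      unfolding decay_bound_def using \<pi>(2) ndist_nonneg[OF normN A_ne] pbar_ge p_pos ahi_pos
      by (intro mult_left_mono powr_mono2) auto
    finally show ?thesis .
  qed
  with \<pi>(1) show ?thesis by blast
qed

lemma partial_sums_stage_cost_le:
  assumes Y: "Y \<noteq> {}" and z: "z \<in> reach f U Y K" and dz: "ndist N z A \<le> r"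
  shows "(\<Sum>k<J. stage_cost k Y) \<le> (\<Sum>k<K. stage_cost k Y) + suminf (decay_bound (ndist N z A))"
proof -
  obtain \<pi> where \<pi>: "\<forall>j. \<pi> j \<in> U" "\<And>j. \<alpha> (traj f z \<pi> j) \<le> decay_bound (ndist N z A) j"
    using stabilizing_input[OF dz] by blast
  have tail: "stage_cost (K + j) Y \<le> decay_bound (ndist N z A) j" for j
    using stage_cost_le[OF reach_append[OF z \<pi>(1)]] \<pi>(2) by (rule order_trans)
  have "(\<Sum>k<J. stage_cost k Y) \<le> (\<Sum>k<K + J. stage_cost k Y)"
    using stage_cost_nonneg[OF Y] by (intro sum_mono2) auto
  also have "\<dots> = (\<Sum>k<K. stage_cost k Y) + (\<Sum>j<J. stage_cost (K + j) Y)"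
    by (induction J) simp_all
  also have "(\<Sum>j<J. stage_cost (K + j) Y) \<le> (\<Sum>j<J. decay_bound (ndist N z A) j)"
    by (intro sum_mono tail)
  also have "\<dots> \<le> suminf (decay_bound (ndist N z A))"
    using dz ndist_nonneg[OF normN A_ne]
    by (intro sum_le_suminf summable_decay_bound) (auto simp: decay_bound_nonneg)
  finally show ?thesis by simp
qed

lemma exists_traj_near_target:
  assumes X: "X \<noteq> {}" and sX: "summable (\<lambda>k. stage_cost k X)" and \<rho>: "\<rho> > 0"
  shows "\<exists>K x \<pi>. x \<in> X \<and> (\<forall>j. \<pi> j \<in> U) \<and> ndist N (traj f x \<pi> K) A < \<rho>"
proof -
  have "eventually (\<lambda>k. stage_cost k X < alo * \<rho> powr pbar) sequentially"
    using alo_pos \<rho> by (intro order_tendstoD(2)[OF summable_LIMSEQ_zero[OF sX]]) simp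
  then obtain K where "stage_cost K X < alo * \<rho> powr pbar"
    unfolding eventually_sequentially by blast
  then obtain z where z: "z \<in> reach f U X K" "\<alpha> z < alo * \<rho> powr pbar"
    unfolding Psi_def using reach_nonempty[OF X] \<alpha>_nonneg
    by (subst (asm) cInf_less_iff) (auto intro: bdd_belowI2[of _ 0])
  have "ndist N z A < \<rho>"
  proof (rule ccontr)
    assume "\<not> ndist N z A < \<rho>"
    then have "alo * \<rho> powr pbar \<le> alo * ndist N z A powr pbar"
      using \<rho> pbar_ge p_pos alo_pos by (intro mult_left_mono powr_mono2) auto
    then show False using \<alpha>_lower[of z] z(2) by linarith
  qed
  with z(1) show ?thesis unfolding reach_def by blast
qed

lemma eventually_partial_sums_le:
  assumes X: "compact X" "X \<noteq> {}" and sX: "summable (\<lambda>k. stage_cost k X)" and e: "e > 0"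
  shows "\<exists>K. eventually (\<lambda>Y. \<forall>J. (\<Sum>k<J. stage_cost k Y) \<le> (\<Sum>k<K. stage_cost k Y) + e)
           (haus_nhds N X)"
proof -
  obtain \<rho> where \<rho>: "\<rho> > 0" "\<rho> \<le> r" "\<And>s. s \<in> {0..\<rho>} \<Longrightarrow> suminf (decay_bound s) \<le> e"
    using small_decay_bound_sums[OF e] by blast
  obtain K x \<pi> where x: "x \<in> X" and \<pi>: "\<forall>j. \<pi> j \<in> U" and near: "ndist N (traj f x \<pi> K) A < \<rho>"
    using exists_traj_near_target[OF X(2) sX \<rho>(1)] by blast
  have "open {y. ndist N (traj f y \<pi> K) A < \<rho>}"
    by (intro open_Collect_less continuous_on_const
        continuous_on_compose2[OF continuous_on_ndist[OF normN A_ne] continuous_on_traj[OF f_cont]]) auto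
  then obtain \<eta> where \<eta>: "\<eta> > 0" "ball x \<eta> \<subseteq> {y. ndist N (traj f y \<pi> K) A < \<rho>}"
    using near open_contains_ball by blast
  from eventually_haus_nhds_close[OF normN X \<eta>(1)] eventually_haus_nhds_compact
  have "eventually (\<lambda>Y. Y \<noteq> {} \<and> (\<exists>y\<in>Y. ndist N (traj f y \<pi> K) A < \<rho>)) (haus_nhds N X)"
  proof eventually_elim
    case (elim Y)
    then obtain y where "y \<in> Y" "dist x y < \<eta>" using x by blast
    then show ?case using \<eta>(2) by auto
  qed
  then show ?thesis
  proof (intro exI[of _ K], eventually_elim)
    case (elim Y)
    then obtain y where Y: "Y \<noteq> {}" and y: "y \<in> Y" "ndist N (traj f y \<pi> K) A < \<rho>" by blast
    have d: "ndist N (traj f y \<pi> K) A \<in> {0..\<rho>}" using y(2) ndist_nonneg[OF normN A_ne] by auto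
    then have "ndist N (traj f y \<pi> K) A \<le> r" using \<rho>(2) by auto
    note partial_sums_stage_cost_le[OF Y traj_in_reach[OF y(1) \<pi>] this]
    with \<rho>(3)[OF d] show ?case by (meson add_left_mono order_trans)
  qed
qed

lemma eventually_Wfun_lt:
  assumes X: "compact X" "X \<noteq> {}" and b: "Wfun f U \<alpha> X < b"
  shows "eventually (\<lambda>Y. Wfun f U \<alpha> Y < b) (haus_nhds N X)"
proof (cases "summable (\<lambda>k. stage_cost k X)")
  case True
  define S where "S = (\<Sum>k. stage_cost k X)"
  have "((\<lambda>t. 1 - exp (- t)) \<longlongrightarrow> 1 - exp (- S)) (at_right S)"
    by (intro tendsto_intros)
  moreover have "1 - exp (- S) < b" using b True by (simp add: Wfun_eq[OF X(2)] S_def)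
  ultimately have "eventually (\<lambda>t. 1 - exp (- t) < b) (at_right S)"
    by (rule order_tendstoD(2))
  then obtain c where c: "S < c" "\<And>t. S < t \<Longrightarrow> t < c \<Longrightarrow> 1 - exp (- t) < b"
    unfolding eventually_at_right_field by blast
  define e where "e = (c - S) / 4"
  have e: "e > 0" "S + 2 * e < c" using c(1) unfolding e_def by (simp_all add: field_simps)
  obtain K where K: "eventually (\<lambda>Y. \<forall>J. (\<Sum>k<J. stage_cost k Y) \<le> (\<Sum>k<K. stage_cost k Y) + e)
      (haus_nhds N X)"
    using eventually_partial_sums_le[OF X True e(1)] by blast
  have "(\<Sum>k<K. stage_cost k X) \<le> S"
    unfolding S_def by (intro sum_le_suminf True) (auto simp: stage_cost_nonneg[OF X(2)])
  then have "(\<Sum>k<K. stage_cost k X) < S + e" using e by linarith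
  from order_tendstoD(2)[OF tendsto_sum[OF tendsto_stage_cost[OF normN X]] this]
    K eventually_haus_nhds_compact
  show ?thesis
  proof eventually_elim
    case (elim Y)
    then have "Wfun f U \<alpha> Y \<le> 1 - exp (- (S + 2 * e))"
      by (intro Wfun_le) (auto intro: order_trans)
    also have "\<dots> < b" using e by (intro c(2)) simp_all
    finally show ?case .
  qed
next
  case False
  then have "1 < b" using b by (simp add: Wfun_eq[OF X(2)])
  from eventually_haus_nhds_compact show ?thesis
  proof eventually_elim
    case (elim Y)
    then show ?case using Wfun_le_one[of Y] \<open>1 < b\<close> by auto
  qed
qed

lemma tendsto_Wfun:
  assumes "compact X" "X \<noteq> {}"
  shows "((\<lambda>Y. Wfun f U \<alpha> Y) \<longlongrightarrow> Wfun f U \<alpha> X) (haus_nhds N X)"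
  using eventually_Wfun_gt[OF normN assms] eventually_Wfun_lt[OF assms] by (rule order_tendstoI)

end

theorem corollary9:
  fixes N :: "real^'n \<Rightarrow> real"
    and f :: "real^'n \<Rightarrow> real^'m \<Rightarrow> real^'n"
    and U :: "(real^'m) set"
    and A :: "(real^'n) set"
    and r M p pbar alo ahi :: real
    and lam :: "real \<Rightarrow> nat \<Rightarrow> real"
    and \<alpha> :: "real^'n \<Rightarrow> real"
  assumes normN: "is_norm N"
    and f_cont: "continuous_on UNIV (\<lambda>(x, u). f x u)"
    and U_compact: "compact U" and U_ne: "U \<noteq> {}"
    and A_compact: "compact A" and A_ne: "A \<noteq> {}"
    and A_inv: "controlled_invariant f U A"
    and r_pos: "r > 0" and M_ge: "M \<ge> 1" and p_pos: "p > 0"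
    and lam_nonneg: "\<And>s k. s \<in> {0..r} \<Longrightarrow> lam s k \<ge> 0"
    and lam_cont: "\<And>k. continuous_on {0..r} (\<lambda>s. lam s k)"
    and lam_mono: "\<And>k s t. s \<in> {0..r} \<Longrightarrow> t \<in> {0..r} \<Longrightarrow> s \<le> t \<Longrightarrow> lam s k \<le> lam t k"
    and lam_zero: "\<And>k. lam 0 k = 0"
    and lam_antimono: "\<And>s k l. s \<in> {0..r} \<Longrightarrow> k \<le> l \<Longrightarrow> lam s l \<le> lam s k"
    and lam_init: "\<And>s. s \<in> {0..r} \<Longrightarrow> lam s 0 \<le> s"
    and lam_summable: "summable (\<lambda>k. lam r k powr p)"
    and stabilizable: "\<And>x. ndist N x A \<le> r \<Longrightarrow>
        \<exists>\<pi>. (\<forall>j. \<pi> j \<in> U) \<and> (\<forall>k. ndist N (traj f x \<pi> k) A \<le> M * lam (ndist N x A) k)"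
    and \<alpha>_cont: "continuous_on UNIV \<alpha>"
    and alo_pos: "alo > 0" and ahi_pos: "ahi > 0" and pbar_ge: "pbar \<ge> p"
    and \<alpha>_lower: "\<And>x. alo * ndist N x A powr pbar \<le> \<alpha> x"
    and \<alpha>_upper: "\<And>x. \<alpha> x \<le> ahi * ndist N x A powr pbar"
  shows "\<forall>X. compact X \<and> X \<noteq> {} \<longrightarrow> (\<forall>\<epsilon>>0. \<exists>\<delta>>0. \<forall>Y. compact Y \<and> Y \<noteq> {} \<and>
            nhausdist N X Y < \<delta> \<longrightarrow> \<bar>Wfun f U \<alpha> Y - Wfun f U \<alpha> X\<bar> < \<epsilon>)"
proof (intro allI impI)
  have \<alpha>_nonneg: "0 \<le> \<alpha> x" for x
    using order_trans[OF _ \<alpha>_lower[of x]] alo_pos by simp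
  interpret stabilizable_system f U \<alpha> N A r M p pbar alo ahi lam
    by unfold_locales (fact assms \<alpha>_nonneg)+
  fix X :: "(real^'n) set" and \<epsilon> :: real
  assume "compact X \<and> X \<noteq> {}" and "\<epsilon> > 0"
  then have "eventually (\<lambda>Y. dist (Wfun f U \<alpha> Y) (Wfun f U \<alpha> X) < \<epsilon>) (haus_nhds N X)"
    using tendsto_Wfun tendstoD by blast
  then show "\<exists>\<delta>>0. \<forall>Y. compact Y \<and> Y \<noteq> {} \<and> nhausdist N X Y < \<delta> \<longrightarrow>
      \<bar>Wfun f U \<alpha> Y - Wfun f U \<alpha> X\<bar> < \<epsilon>"
    unfolding eventually_haus_nhds dist_real_def .
qed

end
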